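(* Let $X_1,\dots,X_n$ be i.i.d. random elements of a measurable space $(E,\mathcal{E})$ with $n\ge 2m$, and let $h:E^m\to\mathbb{R}$ be a symmetric kernel with $\mathbb{E}\{h^2(X_1,\dots,X_m)\}<\infty$. Let $$S_m=\binom{n}{2m}^{-1}\binom{2m}{m}^{-1}\sum_{c=1}^m\binom{n-m}{2m-c}\binom{m}{c}S_{mc},\qquad S_{mc}=\sum_{j=0}^c\binom{c}{j}\binom{2m-c}{m-j}\left(\theta\sigma_j^2+\theta\sigma_{c-j}^2\right).$$ Then $S_m=\frac{\theta}{2}\,\mathbb{V}(2\widehat{\theta})$.
   Context: $\theta=\mathbb{E}\{h(X_1,\dots,X_m)\}$. For $1\le c\le m$, $h_c(x_1,\dots,x_c)=\mathbb{E}\{h(X_1,\dots,X_m)\mid X_1=x_1,\dots,X_c=x_c\}$ and $\sigma_c^2=\mathbb{V}\{h_c(X_1,\dots,X_c)\}$; $\sigma_0^2=0$. $\widehat{\theta}=\binom{n}{m}^{-1}\sum_{1\le i_1<\dots<i_m\le n}h(X_{i_1},\dots,X_{i_m})$ is the U-statistic estimating $\theta$. Binomial coefficients $\binom{a}{b}$ are $0$ when $b>a$. *)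

theory Defs
  imports "HOL-Probability.Probability"
begin

text \<open>Kernels h : E^m -> R are functions on (nat => 'e) applied to arguments
  restricted to {..<m} (i.e. points of the product space E^m, coordinates 0..m-1).\<close>

definition kargs :: "nat \<Rightarrow> (nat \<Rightarrow> 'e) \<Rightarrow> (nat \<Rightarrow> 'e)" where
  "kargs m x = restrict x {..<m}"

definition Utheta :: "'a measure \<Rightarrow> (nat \<Rightarrow> 'a \<Rightarrow> 'e) \<Rightarrow> nat \<Rightarrow> ((nat \<Rightarrow> 'e) \<Rightarrow> real) \<Rightarrow> real" where
  "Utheta M X m h = integral\<^sup>L M (\<lambda>\<omega>. h (kargs m (\<lambda>i. X i \<omega>)))"

text \<open>h_c(x_1..x_c) = E h(x_1,..,x_c,X_{c+1},..,X_m), integrating the remaining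
  m-c independent coordinates against the common distribution P of the X_i.\<close>
definition hcond :: "'e measure \<Rightarrow> nat \<Rightarrow> ((nat \<Rightarrow> 'e) \<Rightarrow> real) \<Rightarrow> nat \<Rightarrow> (nat \<Rightarrow> 'e) \<Rightarrow> real" where
  "hcond P m h c x =
     (\<integral>y. h (kargs m (\<lambda>i. if i < c then x i else y i)) \<partial>(PiM {c..<m} (\<lambda>_. P)))"

definition Usigma2 :: "'a measure \<Rightarrow> 'e measure \<Rightarrow> (nat \<Rightarrow> 'a \<Rightarrow> 'e) \<Rightarrow> nat \<Rightarrow> ((nat \<Rightarrow> 'e) \<Rightarrow> real) \<Rightarrow> nat \<Rightarrow> real" where
  "Usigma2 M N X m h c =
     (if c = 0 then 0 else
      prob_space.variance M (\<lambda>\<omega>. hcond (distr M N (X 0)) m h c (\<lambda>i. X i \<omega>)))"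

definition Ustat :: "nat \<Rightarrow> nat \<Rightarrow> ((nat \<Rightarrow> 'e) \<Rightarrow> real) \<Rightarrow> (nat \<Rightarrow> 'a \<Rightarrow> 'e) \<Rightarrow> 'a \<Rightarrow> real" where
  "Ustat n m h X \<omega> =
     (\<Sum>S\<in>{S. S \<subseteq> {..<n} \<and> card S = m}.
        h (kargs m (\<lambda>k. X (sorted_list_of_set S ! k) \<omega>))) / real (n choose m)"

end

theory Submission
  imports Defs
begin

text \<open>For two
  m-subsets with |S \<inter> T| = c, independence and Fubini give
  E[h(X_S) h(X_T)] = E[h_c^2] = sigma_c^2 + theta^2, and counting the pairs (S, T) by c gives
  Hoeffding's formula Var(U) = (n choose m)^-1 * sum_c (m choose c) ((n-m) choose (m-c)) sigma_c^2.
  In S_m the two halves of each inner sum agree under j \<mapsto> c - j, and after exchanging the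
  sums over c and j the sum over c is a Vandermonde convolution; what remains is
  2 theta Var(U) = (theta/2) Var(2 U).\<close>

section \<open>Binomial identities\<close>

lemma choose_mult':
  fixes n m k :: nat
  assumes "k \<le> m"
  shows "(n choose m) * (m choose k) = (n choose k) * ((n - k) choose (m - k))"
proof (cases "m \<le> n")
  case True
  then show ?thesis using choose_mult[OF assms] by simp
next
  case False
  then show ?thesis using assms by (cases "k \<le> n") (simp_all add: binomial_eq_0)
qed

lemma sum_choose_overlap:
  fixes N m j :: nat
  assumes "j \<le> m" "m \<le> N"
  shows "(\<Sum>c\<le>m. (N choose (2*m - c)) * (m choose c) * (c choose j) * ((2*m - c) choose (m - j)))
       = (N choose m) * (m choose j) * (N choose (m - j))"
proof -
  have "(\<Sum>c\<le>m. (N choose (2*m - c)) * (m choose c) * (c choose j) * ((2*m - c) choose (m - j)))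
      = (\<Sum>c\<in>{j..m}. (m choose j) * (N choose (m - j)) * (((m - j) choose (c - j)) * ((N - (m - j)) choose (m - (c - j)))))"
  proof (rule sum.mono_neutral_cong_right)
    fix c assume c: "c \<in> {j..m}"
    have "(m choose c) * (c choose j) = (m choose j) * ((m - j) choose (c - j))"
      using c by (intro choose_mult) auto
    moreover have "(N choose (2*m - c)) * ((2*m - c) choose (m - j))
        = (N choose (m - j)) * ((N - (m - j)) choose (m - (c - j)))"
    proof -
      have "m - j \<le> 2*m - c" "2*m - c - (m - j) = m - (c - j)" using c by auto
      then show ?thesis using choose_mult'[of "m - j" "2*m - c" N] by simp
    qed
    moreover have "(N choose (2*m - c)) * (m choose c) * (c choose j) * ((2*m - c) choose (m - j))
        = ((m choose c) * (c choose j)) * ((N choose (2*m - c)) * ((2*m - c) choose (m - j)))"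
      by (simp only: ac_simps)
    ultimately show "(N choose (2*m - c)) * (m choose c) * (c choose j) * ((2*m - c) choose (m - j))
        = (m choose j) * (N choose (m - j)) * (((m - j) choose (c - j)) * ((N - (m - j)) choose (m - (c - j))))"
      by (simp only: ac_simps)
  qed auto
  also have "\<dots> = (m choose j) * (N choose (m - j)) * (\<Sum>c\<in>{j..m}. ((m - j) choose (c - j)) * ((N - (m - j)) choose (m - (c - j))))"
    by (simp add: sum_distrib_left)
  also have "(\<Sum>c\<in>{j..m}. ((m - j) choose (c - j)) * ((N - (m - j)) choose (m - (c - j))))
      = (\<Sum>i\<le>m - j. ((m - j) choose i) * ((N - (m - j)) choose (m - i)))"
    by (rule sum.reindex_bij_witness[of _ "\<lambda>i. i + j" "\<lambda>c. c - j"]) (use assms in auto)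
  also have "(\<Sum>i\<le>m - j. ((m - j) choose i) * ((N - (m - j)) choose (m - i))) = N choose m"
    using vandermonde[of "m - j" "N - (m - j)" m] assms
    by (simp add: sum.mono_neutral_left[of "{..m}" "{..m - j}"])
  finally show ?thesis by (simp add: ac_simps)
qed

lemma sum_choose_symmetrize:
  fixes s :: "nat \<Rightarrow> real"
  assumes "c \<le> m"
  shows "(\<Sum>j=0..c. real (c choose j) * real ((2*m - c) choose (m - j)) * (s j + s (c - j)))
       = 2 * (\<Sum>j\<le>m. real (c choose j) * real ((2*m - c) choose (m - j)) * s j)"
proof -
  define a where "a j = real (c choose j) * real ((2*m - c) choose (m - j))" for j
  have "a (c - j) = a j" if "j \<le> c" for j
  proof -
    have "c choose (c - j) = c choose j"
      using that by (simp add: binomial_symmetric[symmetric])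
    moreover have "(2*m - c) choose (m - (c - j)) = (2*m - c) choose (m - j)"
      using that assms binomial_symmetric[of "m - j" "2*m - c"] by (simp add: diff_diff_left)
    ultimately show ?thesis by (simp add: a_def)
  qed
  then have "(\<Sum>j=0..c. a j * s (c - j)) = (\<Sum>j=0..c. a j * s j)"
    by (intro sum.reindex_bij_witness[of _ "\<lambda>j. c - j" "\<lambda>j. c - j"]) auto
  then have "(\<Sum>j=0..c. a j * (s j + s (c - j))) = 2 * (\<Sum>j=0..c. a j * s j)"
    by (simp add: distrib_left sum.distrib)
  also have "\<dots> = 2 * (\<Sum>j\<le>m. a j * s j)"
    using assms by (simp add: sum.mono_neutral_left[of "{..m}" "{0..c}"] a_def)
  finally show ?thesis by (simp add: a_def)
qed

lemma overlap_double_sum: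
  fixes s :: "nat \<Rightarrow> real"
  assumes s0: "s 0 = 0" and n: "2*m \<le> n"
  shows "1 / real (n choose (2*m)) * (1 / real ((2*m) choose m)) *
          (\<Sum>c=1..m. real ((n - m) choose (2*m - c)) * real (m choose c) *
             (\<Sum>j=0..c. real (c choose j) * real ((2*m - c) choose (m - j)) * (s j + s (c - j))))
       = 2 * (\<Sum>k\<le>m. real (m choose k) * real ((n - m) choose (m - k)) * s k) / real (n choose m)"
proof -
  define w where "w c j = real ((n - m) choose (2*m - c)) * real (m choose c) * real (c choose j)
    * real ((2*m - c) choose (m - j))" for c j
  have w0: "w 0 j * s j = 0" for j
    by (cases j) (simp_all add: w_def s0)
  have "(\<Sum>c=1..m. real ((n - m) choose (2*m - c)) * real (m choose c) *
          (\<Sum>j=0..c. real (c choose j) * real ((2*m - c) choose (m - j)) * (s j + s (c - j))))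
      = (\<Sum>c=1..m. 2 * (\<Sum>j\<le>m. w c j * s j))"
  proof (rule sum.cong[OF refl])
    fix c assume "c \<in> {1..m}"
    then have sym: "(\<Sum>j=0..c. real (c choose j) * real ((2*m - c) choose (m - j)) * (s j + s (c - j)))
        = 2 * (\<Sum>j\<le>m. real (c choose j) * real ((2*m - c) choose (m - j)) * s j)"
      by (intro sum_choose_symmetrize) simp
    show "real ((n - m) choose (2*m - c)) * real (m choose c) *
        (\<Sum>j=0..c. real (c choose j) * real ((2*m - c) choose (m - j)) * (s j + s (c - j)))
        = 2 * (\<Sum>j\<le>m. w c j * s j)"
      unfolding sym by (simp add: w_def sum_distrib_left ac_simps)
  qed
  also have "\<dots> = 2 * (\<Sum>c=1..m. \<Sum>j\<le>m. w c j * s j)"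
    by (simp add: sum_distrib_left)
  also have "\<dots> = 2 * (\<Sum>c\<le>m. \<Sum>j\<le>m. w c j * s j)"
    by (subst sum.mono_neutral_left[of "{..m}" "{1..m}"]) (auto simp: w0 Suc_le_eq)
  also have "\<dots> = 2 * (\<Sum>j\<le>m. s j * (\<Sum>c\<le>m. w c j))"
    by (subst sum.swap) (simp add: sum_distrib_left ac_simps)
  also have "\<dots> = 2 * real ((n - m) choose m) * (\<Sum>k\<le>m. real (m choose k) * real ((n - m) choose (m - k)) * s k)"
  proof -
    have "(\<Sum>c\<le>m. w c j) = real ((n - m) choose m) * real (m choose j) * real ((n - m) choose (m - j))"
      if "j \<le> m" for j
      using arg_cong[OF sum_choose_overlap[OF that, of "n - m"], of real] n
      by (simp add: w_def ac_simps)
    then show ?thesis by (simp add: sum_distrib_left ac_simps)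
  qed
  moreover have "real (n choose (2*m)) * real ((2*m) choose m) = real (n choose m) * real ((n - m) choose m)"
    using choose_mult[of m "2*m" n] n by (simp flip: of_nat_mult)
  moreover have "real (n choose m) > 0" "real ((n - m) choose m) > 0"
    using n by simp_all
  ultimately show ?thesis
    by (simp add: field_simps)
qed

section \<open>Pairs of subsets with a given overlap\<close>

lemma card_subsets_Int_card:
  assumes U: "finite U" and S: "S \<subseteq> U" "card S = m" and k: "k \<le> m"
  shows "card {T. T \<subseteq> U \<and> card T = m \<and> card (S \<inter> T) = k} = (m choose k) * ((card U - m) choose (m - k))"
proof -
  have fS: "finite S" using U S finite_subset by blast
  have "bij_betw (\<lambda>(A, B). A \<union> B) ({A. A \<subseteq> S \<and> card A = k} \<times> {B. B \<subseteq> U - S \<and> card B = m - k})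
          {T. T \<subseteq> U \<and> card T = m \<and> card (S \<inter> T) = k}"
  proof (rule bij_betwI[where g="\<lambda>T. (S \<inter> T, T - S)"])
    have "card (A \<union> B) = m" if "A \<subseteq> S" "card A = k" "B \<subseteq> U - S" "card B = m - k" for A B
      using that k card_Un_disjoint[of A B] finite_subset[OF _ fS] finite_subset[of B U] U by auto
    moreover have "S \<inter> (A \<union> B) = A" if "A \<subseteq> S" "B \<subseteq> U - S" for A B
      using that by auto
    ultimately show "(\<lambda>(A, B). A \<union> B) \<in> {A. A \<subseteq> S \<and> card A = k} \<times> {B. B \<subseteq> U - S \<and> card B = m - k}
        \<rightarrow> {T. T \<subseteq> U \<and> card T = m \<and> card (S \<inter> T) = k}"
      using S by auto
    have "card (T - S) = m - k" if "T \<subseteq> U" "card T = m" "card (S \<inter> T) = k" for T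
      using that card_Diff_subset_Int[of T S] finite_subset[OF _ U] by (simp add: Int_commute)
    then show "(\<lambda>T. (S \<inter> T, T - S)) \<in> {T. T \<subseteq> U \<and> card T = m \<and> card (S \<inter> T) = k}
        \<rightarrow> {A. A \<subseteq> S \<and> card A = k} \<times> {B. B \<subseteq> U - S \<and> card B = m - k}"
      by auto
  qed auto
  then have "card {T. T \<subseteq> U \<and> card T = m \<and> card (S \<inter> T) = k}
      = card {A. A \<subseteq> S \<and> card A = k} * card {B. B \<subseteq> U - S \<and> card B = m - k}"
    by (simp add: bij_betw_same_card[symmetric] card_cartesian_product)
  also have "\<dots> = (m choose k) * ((card U - m) choose (m - k))"
    using n_subsets[OF fS, of k] n_subsets[of "U - S" "m - k"] U S fS by (simp add: card_Diff_subset)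
  finally show ?thesis .
qed

lemma sum_subsets_by_card_Int:
  fixes f :: "nat \<Rightarrow> 'b::comm_semiring_1"
  assumes U: "finite U" and S: "S \<subseteq> U" "card S = m"
  shows "(\<Sum>T | T \<subseteq> U \<and> card T = m. f (card (S \<inter> T)))
       = (\<Sum>k\<le>m. of_nat (m choose k) * of_nat ((card U - m) choose (m - k)) * f k)"
proof -
  have "card (S \<inter> T) \<le> m" for T
    using S U by (metis card_mono finite_subset inf_le1)
  then have "(\<Sum>T | T \<subseteq> U \<and> card T = m. f (card (S \<inter> T)))
      = (\<Sum>k\<le>m. \<Sum>T | T \<subseteq> U \<and> card T = m \<and> card (S \<inter> T) = k. f k)"
    using U by (subst sum.group[symmetric, of _ "{..m}" "\<lambda>T. card (S \<inter> T)"]) (auto intro!: sum.cong)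
  also have "\<dots> = (\<Sum>k\<le>m. of_nat (m choose k) * of_nat ((card U - m) choose (m - k)) * f k)"
    using card_subsets_Int_card[OF U S] by (simp flip: of_nat_mult)
  finally show ?thesis .
qed

lemma bij_betw_sorted_list_of_set:
  "finite S \<Longrightarrow> card S = m \<Longrightarrow> bij_betw ((!) (sorted_list_of_set S)) {..<m} S"
  by (rule bij_betw_nth) simp_all

text \<open>Two m-subsets meeting in c points are laid out on the coordinates below 2m - c: the
  shared points first (below c), then the rest of the first subset (c..<m), then the rest of
  the second (m..<2m-c). The map overlap_idx m c enumerates the second subset.\<close>

definition overlap_idx :: "nat \<Rightarrow> nat \<Rightarrow> nat \<Rightarrow> nat" where
  "overlap_idx m c k = (if k < c then k else k + (m - c))"

lemma bij_betw_overlap_idx: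
  assumes "c \<le> m"
  shows "bij_betw (overlap_idx m c) {..<m} ({..<c} \<union> {m..<2*m - c})"
proof -
  have "overlap_idx m c ` {..<m} = {..<c} \<union> {m..<2*m - c}"
  proof (intro equalityI subsetI)
    fix k assume "k \<in> {..<c} \<union> {m..<2*m - c}"
    then have "k = overlap_idx m c (if k < c then k else k - (m - c))"
      and "(if k < c then k else k - (m - c)) \<in> {..<m}"
      using assms by (auto simp: overlap_idx_def)
    then show "k \<in> overlap_idx m c ` {..<m}" by blast
  qed (use assms in \<open>auto simp: overlap_idx_def\<close>)
  moreover have "inj_on (overlap_idx m c) {..<m}"
    by (auto simp: inj_on_def overlap_idx_def)
  ultimately show ?thesis by (simp add: bij_betw_def)
qed

lemma overlap_idx_less: "c \<le> m \<Longrightarrow> k < m \<Longrightarrow> overlap_idx m c k < 2*m - c"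
  by (simp add: overlap_idx_def, arith)

lemma obtain_overlap_enumeration:
  assumes S: "finite S" "card S = m" and T: "finite T" "card T = m"
  obtains \<phi> where "bij_betw \<phi> {..<2*m - card (S \<inter> T)} (S \<union> T)" "bij_betw \<phi> {..<m} S"
    "bij_betw (\<phi> \<circ> overlap_idx m (card (S \<inter> T))) {..<m} T"
proof -
  define c where "c = card (S \<inter> T)"
  have c: "c \<le> m" unfolding c_def using S by (metis card_mono inf_le1)
  have "card (S - T) = m - c" "card (T - S) = m - c"
    using card_Diff_subset_Int[of S T] card_Diff_subset_Int[of T S] S T
    by (simp_all add: c_def Int_commute)
  then obtain f1 f2 f3 where f1: "bij_betw f1 {..<c} (S \<inter> T)" and f2: "bij_betw f2 {c..<m} (S - T)"
    and f3: "bij_betw f3 {m..<2*m - c} (T - S)"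
    using finite_same_card_bij[of "{..<c}" "S \<inter> T"] finite_same_card_bij[of "{c..<m}" "S - T"]
      finite_same_card_bij[of "{m..<2*m - c}" "T - S"] S T c
    by (auto simp: c_def)
  define \<phi> where "\<phi> k = (if k < c then f1 k else if k < m then f2 k else f3 k)" for k
  have b1: "bij_betw \<phi> {..<c} (S \<inter> T)"
    using f1 by (subst bij_betw_cong[where g=f1]) (auto simp: \<phi>_def)
  have b2: "bij_betw \<phi> {c..<m} (S - T)"
    using f2 by (subst bij_betw_cong[where g=f2]) (auto simp: \<phi>_def)
  have b3: "bij_betw \<phi> {m..<2*m - c} (T - S)"
    using f3 by (subst bij_betw_cong[where g=f3]) (auto simp: \<phi>_def)
  have "bij_betw \<phi> ({..<c} \<union> {c..<m}) (S \<inter> T \<union> (S - T))"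
    by (rule bij_betw_combine[OF b1 b2]) auto
  moreover have "{..<c} \<union> {c..<m} = {..<m}" "S \<inter> T \<union> (S - T) = S"
    using c by auto
  ultimately have bS: "bij_betw \<phi> {..<m} S" by simp
  have "bij_betw \<phi> ({..<m} \<union> {m..<2*m - c}) (S \<union> (T - S))"
    by (rule bij_betw_combine[OF bS b3]) auto
  moreover have "{..<m} \<union> {m..<2*m - c} = {..<2*m - c}" "S \<union> (T - S) = S \<union> T"
    using c by auto
  ultimately have bU: "bij_betw \<phi> {..<2*m - c} (S \<union> T)" by simp
  have "bij_betw \<phi> ({..<c} \<union> {m..<2*m - c}) (S \<inter> T \<union> (T - S))"
    by (rule bij_betw_combine[OF b1 b3]) auto
  moreover have "S \<inter> T \<union> (T - S) = T" by auto
  ultimately have "bij_betw (\<phi> \<circ> overlap_idx m c) {..<m} T"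
    using bij_betw_trans[OF bij_betw_overlap_idx[OF c]] by simp
  with bU bS show thesis by (intro that) (simp_all add: c_def)
qed

lemma integrable_mult_square_integrable:
  fixes f g :: "'a \<Rightarrow> real"
  assumes "f \<in> borel_measurable M" "g \<in> borel_measurable M"
    and "integrable M (\<lambda>x. (f x)\<^sup>2)" "integrable M (\<lambda>x. (g x)\<^sup>2)"
  shows "integrable M (\<lambda>x. f x * g x)"
proof (rule Bochner_Integration.integrable_bound)
  show "integrable M (\<lambda>x. (f x)\<^sup>2 + (g x)\<^sup>2)"
    using assms by simp
  have "\<bar>a * b\<bar> \<le> a\<^sup>2 + b\<^sup>2" for a b :: real
  proof -
    have "2 * (\<bar>a\<bar> * \<bar>b\<bar>) \<le> a\<^sup>2 + b\<^sup>2"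
      using sum_squares_bound[of "\<bar>a\<bar>" "\<bar>b\<bar>"] by (simp add: mult.assoc)
    moreover have "0 \<le> \<bar>a\<bar> * \<bar>b\<bar>" by simp
    ultimately show ?thesis unfolding abs_mult by linarith
  qed
  then show "AE x in M. norm (f x * g x) \<le> norm ((f x)\<^sup>2 + (g x)\<^sup>2)"
    by simp
qed (use assms in measurable)

lemma (in prob_space) expectation_sum_square:
  fixes Y :: "'i \<Rightarrow> 'a \<Rightarrow> real"
  assumes "\<And>i j. i \<in> I \<Longrightarrow> j \<in> I \<Longrightarrow> integrable M (\<lambda>x. Y i x * Y j x)"
  shows "integrable M (\<lambda>x. (\<Sum>i\<in>I. Y i x)\<^sup>2)"
    and "expectation (\<lambda>x. (\<Sum>i\<in>I. Y i x)\<^sup>2) = (\<Sum>i\<in>I. \<Sum>j\<in>I. expectation (\<lambda>x. Y i x * Y j x))"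
  using assms by (simp_all add: power2_eq_square sum_product)

lemma (in prob_space) variance_cmult:
  fixes Y :: "'a \<Rightarrow> real"
  shows "variance (\<lambda>x. c * Y x) = c\<^sup>2 * variance Y"
  by (simp add: right_diff_distrib[symmetric] power_mult_distrib)

section \<open>Samples of independent identically distributed variables\<close>

locale iid_sample = prob_space M for M :: "'a measure" +
  fixes N :: "'e measure" and X :: "nat \<Rightarrow> 'a \<Rightarrow> 'e" and n :: nat
  assumes n_pos: "0 < n"
    and X_measurable: "\<And>i. i < n \<Longrightarrow> X i \<in> measurable M N"
    and X_indep: "indep_vars (\<lambda>_. N) X {..<n}"
    and X_ident: "\<And>i. i < n \<Longrightarrow> distr M N (X i) = distr M N (X 0)"
begin

definition P :: "'e measure" where
  "P = distr M N (X 0)"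

abbreviation PiP :: "nat set \<Rightarrow> (nat \<Rightarrow> 'e) measure" where
  "PiP J \<equiv> PiM J (\<lambda>_. P)"

lemma prob_space_P: "prob_space P"
  unfolding P_def using X_measurable[OF n_pos] by (rule prob_space_distr)

lemma prob_space_PiP: "prob_space (PiP J)"
  using prob_space_P by (intro prob_space_PiM) auto

lemma product_sigma_finite_P: "product_sigma_finite (\<lambda>_. P)"
  using prob_space_P by (simp add: product_sigma_finite_def prob_space_imp_sigma_finite)

lemma sets_PiP: "sets (PiP J) = sets (PiM J (\<lambda>_. N))"
  by (rule sets_PiM_cong) (simp_all add: P_def)

lemma measurable_PiP_iff: "measurable (PiP J) K = measurable (PiM J (\<lambda>_. N)) K"
  by (rule measurable_cong_sets[OF sets_PiP refl])

lemma sample_measurable: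
  assumes "\<phi> ` J \<subseteq> {..<n}"
  shows "(\<lambda>\<omega>. \<lambda>j\<in>J. X (\<phi> j) \<omega>) \<in> measurable M (PiM J (\<lambda>_. N))"
  by (rule measurable_restrict) (use assms X_measurable in auto)

lemma distr_sample:
  assumes inj: "inj_on \<phi> J" and img: "\<phi> ` J \<subseteq> {..<n}"
  shows "distr M (PiM J (\<lambda>_. N)) (\<lambda>\<omega>. \<lambda>j\<in>J. X (\<phi> j) \<omega>) = PiP J"
proof -
  let ?Y = "\<lambda>\<omega>. \<lambda>i\<in>{..<n}. X i \<omega>" and ?g = "\<lambda>x. \<lambda>j\<in>J. x (\<phi> j)"
  have g: "?g \<in> measurable (PiM {..<n} (\<lambda>_. N)) (PiM J (\<lambda>_. N))"
    by (rule measurable_restrict) (use img in \<open>auto intro!: measurable_component_singleton\<close>)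
  have "distr M (PiM {..<n} (\<lambda>_. N)) ?Y = PiM {..<n} (\<lambda>i. distr M N (X i))"
    using X_indep indep_vars_iff_distr_eq_PiM'[of "{..<n}" X "\<lambda>_. N"] n_pos X_measurable by auto
  also have "\<dots> = PiP {..<n}"
    by (auto simp: P_def intro!: PiM_cong X_ident)
  finally have Y: "distr M (PiM {..<n} (\<lambda>_. N)) ?Y = PiP {..<n}" .
  have "distr M (PiM J (\<lambda>_. N)) (\<lambda>\<omega>. \<lambda>j\<in>J. X (\<phi> j) \<omega>) = distr M (PiM J (\<lambda>_. N)) (?g \<circ> ?Y)"
    by (rule distr_cong) (use img in \<open>auto simp: fun_eq_iff\<close>)
  also have "\<dots> = distr (PiP {..<n}) (PiM J (\<lambda>_. N)) ?g"
    using distr_distr[OF g sample_measurable[of id "{..<n}"]] by (simp add: Y)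
  also have "\<dots> = distr (PiP {..<n}) (PiP J) ?g"
    by (rule distr_cong) (simp_all add: sets_PiP)
  also have "\<dots> = PiP J"
    using distr_PiM_reindex[of "{..<n}" "\<lambda>_. P" \<phi> J] prob_space_P inj img by auto
  finally show ?thesis .
qed

lemma
  fixes g :: "(nat \<Rightarrow> 'e) \<Rightarrow> real"
  assumes "inj_on \<phi> J" "\<phi> ` J \<subseteq> {..<n}" and g: "g \<in> borel_measurable (PiM J (\<lambda>_. N))"
  shows integral_sample: "expectation (\<lambda>\<omega>. g (\<lambda>j\<in>J. X (\<phi> j) \<omega>)) = integral\<^sup>L (PiP J) g"
    and integrable_sample_iff: "integrable M (\<lambda>\<omega>. g (\<lambda>j\<in>J. X (\<phi> j) \<omega>)) \<longleftrightarrow> integrable (PiP J) g"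
  using integral_distr[OF sample_measurable[OF assms(2)] g]
    integrable_distr_eq[OF sample_measurable[OF assms(2)] g] distr_sample[OF assms(1,2)]
  by simp_all

end

section \<open>U-statistics with a symmetric kernel\<close>

locale u_statistic = iid_sample M N X n
  for M :: "'a measure" and N :: "'e measure" and X :: "nat \<Rightarrow> 'a \<Rightarrow> 'e" and n +
  fixes h :: "(nat \<Rightarrow> 'e) \<Rightarrow> real" and m :: nat
  assumes two_m_le_n: "2 * m \<le> n"
    and h_measurable: "h \<in> borel_measurable (PiM {..<m} (\<lambda>_. N))"
    and h_symmetric: "\<And>x \<pi>. x \<in> space (PiM {..<m} (\<lambda>_. N)) \<Longrightarrow> \<pi> permutes {..<m} \<Longrightarrow>
           h (kargs m (x \<circ> \<pi>)) = h x"
    and h_square_integrable: "integrable M (\<lambda>\<omega>. (h (kargs m (\<lambda>i. X i \<omega>)))\<^sup>2)"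
begin

lemma h_reindex_bij_betw:
  assumes a: "bij_betw \<alpha> {..<m} A" and b: "bij_betw \<beta> {..<m} A"
    and x: "\<And>i. i \<in> A \<Longrightarrow> x i \<in> space N"
  shows "h (\<lambda>k\<in>{..<m}. x (\<alpha> k)) = h (\<lambda>k\<in>{..<m}. x (\<beta> k))"
proof -
  define \<pi> where "\<pi> k = (if k < m then the_inv_into {..<m} \<beta> (\<alpha> k) else k)" for k
  have "bij_betw (the_inv_into {..<m} \<beta> \<circ> \<alpha>) {..<m} {..<m}"
    using a bij_betw_the_inv_into[OF b] by (rule bij_betw_trans)
  then have "bij_betw \<pi> {..<m} {..<m}"
    by (subst bij_betw_cong[where g="the_inv_into {..<m} \<beta> \<circ> \<alpha>"]) (auto simp: \<pi>_def)
  then have "\<pi> permutes {..<m}"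
    by (rule bij_imp_permutes) (simp add: \<pi>_def)
  moreover have "(\<lambda>k\<in>{..<m}. x (\<beta> k)) \<in> space (PiM {..<m} (\<lambda>_. N))"
    using b x by (auto simp: space_PiM bij_betw_def)
  moreover have "kargs m ((\<lambda>k\<in>{..<m}. x (\<beta> k)) \<circ> \<pi>) = (\<lambda>k\<in>{..<m}. x (\<alpha> k))"
  proof
    fix k
    show "kargs m ((\<lambda>k\<in>{..<m}. x (\<beta> k)) \<circ> \<pi>) k = (\<lambda>k\<in>{..<m}. x (\<alpha> k)) k"
    proof (cases "k < m")
      case True
      then have "\<alpha> k \<in> \<beta> ` {..<m}" using a b by (auto simp: bij_betw_def)
      then have "\<beta> (\<pi> k) = \<alpha> k" "\<pi> k < m"
        using b True the_inv_into_into[of \<beta> "{..<m}" "\<alpha> k" "{..<m}"]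
        by (auto simp: \<pi>_def bij_betw_def f_the_inv_into_f)
      then show ?thesis using True by (simp add: kargs_def)
    qed (simp add: kargs_def)
  qed
  ultimately show ?thesis using h_symmetric by metis
qed

definition h_sample :: "(nat \<Rightarrow> nat) \<Rightarrow> 'a \<Rightarrow> real" where
  "h_sample \<rho> = (\<lambda>\<omega>. h (\<lambda>k\<in>{..<m}. X (\<rho> k) \<omega>))"

definition theta :: real where
  "theta = integral\<^sup>L (PiP {..<m}) h"

lemma square_integrable_h: "integrable (PiP {..<m}) (\<lambda>y. (h y)\<^sup>2)"
proof -
  have "id ` {..<m} \<subseteq> {..<n}" using two_m_le_n by auto
  moreover have "(\<lambda>y. (h y)\<^sup>2) \<in> borel_measurable (PiM {..<m} (\<lambda>_. N))"
    using h_measurable by measurable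
  ultimately show ?thesis
    using h_square_integrable integrable_sample_iff[of id "{..<m}" "\<lambda>y. (h y)\<^sup>2"]
    by (simp add: kargs_def restrict_def)
qed

lemma integrable_h: "integrable (PiP {..<m}) h"
proof -
  interpret PiP: prob_space "PiP {..<m}" by (rule prob_space_PiP)
  show ?thesis
    using PiP.square_integrable_imp_integrable[OF _ square_integrable_h] h_measurable
    by (simp add: measurable_PiP_iff)
qed

lemma
  assumes "inj_on \<rho> {..<m}" "\<rho> ` {..<m} \<subseteq> {..<n}"
  shows h_sample_measurable: "h_sample \<rho> \<in> borel_measurable M"
    and square_integrable_h_sample: "integrable M (\<lambda>\<omega>. (h_sample \<rho> \<omega>)\<^sup>2)"
    and integrable_h_sample: "integrable M (h_sample \<rho>)"
    and expectation_h_sample: "expectation (h_sample \<rho>) = theta"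
proof -
  have h2: "(\<lambda>y. (h y)\<^sup>2) \<in> borel_measurable (PiM {..<m} (\<lambda>_. N))"
    using h_measurable by measurable
  show "h_sample \<rho> \<in> borel_measurable M"
    using measurable_comp[OF sample_measurable[OF assms(2)] h_measurable]
    by (simp add: h_sample_def comp_def)
  show "integrable M (\<lambda>\<omega>. (h_sample \<rho> \<omega>)\<^sup>2)"
    using integrable_sample_iff[OF assms h2] square_integrable_h by (simp add: h_sample_def)
  show "integrable M (h_sample \<rho>)"
    using integrable_sample_iff[OF assms h_measurable] integrable_h by (simp add: h_sample_def)
  show "expectation (h_sample \<rho>) = theta"
    using integral_sample[OF assms h_measurable] by (simp add: h_sample_def theta_def)
qed

lemma Utheta_eq_theta: "Utheta M X m h = theta"
proof -
  have "Utheta M X m h = expectation (h_sample id)"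
    by (simp add: Utheta_def h_sample_def kargs_def restrict_def id_def)
  also have "\<dots> = theta"
    by (rule expectation_h_sample) (use two_m_le_n in auto)
  finally show ?thesis .
qed

lemma hcond_restrict: "hcond P m h c (restrict x {..<c}) = hcond P m h c x"
  by (simp add: hcond_def restrict_def cong: if_cong)

lemma hcond_eq_integral_merge:
  assumes "c \<le> m"
  shows "hcond P m h c x = (\<integral>y. h (merge {..<c} {c..<m} (x, y)) \<partial>PiP {c..<m})"
proof -
  have "kargs m (\<lambda>i. if i < c then x i else y i) = merge {..<c} {c..<m} (x, y)" for y
    using assms by (auto simp: fun_eq_iff kargs_def merge_def)
  then show ?thesis by (simp add: hcond_def)
qed

lemma h_merge_measurable:
  assumes "c \<le> m"
  shows "(\<lambda>p. h (merge {..<c} {c..<m} p)) \<in> borel_measurable (PiP {..<c} \<Otimes>\<^sub>M PiP {c..<m})"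
proof -
  have "{..<c} \<union> {c..<m} = {..<m}" using assms by auto
  then have "merge {..<c} {c..<m} \<in> measurable (PiP {..<c} \<Otimes>\<^sub>M PiP {c..<m}) (PiP {..<m})"
    using measurable_merge[of "{..<c}" "{c..<m}" "\<lambda>_. P"] by simp
  then show ?thesis
    using h_measurable by (simp add: measurable_PiP_iff[symmetric])
qed

lemma hcond_measurable:
  assumes "c \<le> m"
  shows "hcond P m h c \<in> borel_measurable (PiP {..<c})"
proof -
  interpret PiP: prob_space "PiP {c..<m}" by (rule prob_space_PiP)
  have "(\<lambda>x. \<integral>y. h (merge {..<c} {c..<m} (x, y)) \<partial>PiP {c..<m}) \<in> borel_measurable (PiP {..<c})"
    by (rule PiP.borel_measurable_lebesgue_integral) (use h_merge_measurable[OF assms] in simp)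
  then show ?thesis
    by (simp add: hcond_eq_integral_merge[OF assms] cong: measurable_cong)
qed

lemma integral_hcond:
  assumes "c \<le> m"
  shows "integral\<^sup>L (PiP {..<c}) (hcond P m h c) = theta"
proof -
  interpret product_sigma_finite "\<lambda>_. P" by (rule product_sigma_finite_P)
  have "{..<c} \<union> {c..<m} = {..<m}" "{..<c} \<inter> {c..<m} = {}" using assms by auto
  then have "theta = (\<integral>x. (\<integral>y. h (merge {..<c} {c..<m} (x, y)) \<partial>PiP {c..<m}) \<partial>PiP {..<c})"
    using product_integral_fold[of "{..<c}" "{c..<m}" h] integrable_h by (simp add: theta_def)
  moreover have "hcond P m h c = (\<lambda>x. \<integral>y. h (merge {..<c} {c..<m} (x, y)) \<partial>PiP {c..<m})"
    using hcond_eq_integral_merge[OF assms] by (rule ext)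
  ultimately show ?thesis by simp
qed

definition overlap_prod :: "nat \<Rightarrow> (nat \<Rightarrow> 'e) \<Rightarrow> real" where
  "overlap_prod c y = h (restrict y {..<m}) * h (\<lambda>k\<in>{..<m}. y (overlap_idx m c k))"

definition overlap_moment :: "nat \<Rightarrow> real" where
  "overlap_moment c = integral\<^sup>L (PiP {..<2*m - c}) (overlap_prod c)"

lemma overlap_prod_measurable:
  assumes "c \<le> m"
  shows "overlap_prod c \<in> borel_measurable (PiM {..<2*m - c} (\<lambda>_. N))"
proof -
  have "(\<lambda>y. \<lambda>k\<in>{..<m}. y (\<rho> k)) \<in> measurable (PiM {..<2*m - c} (\<lambda>_. N)) (PiM {..<m} (\<lambda>_. N))"
    if "\<And>k. k < m \<Longrightarrow> \<rho> k < 2*m - c" for \<rho>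
    by (rule measurable_restrict) (use that in \<open>auto intro!: measurable_component_singleton\<close>)
  from this[of id] this[of "overlap_idx m c"] show ?thesis
    unfolding overlap_prod_def using assms overlap_idx_less[OF assms] h_measurable by simp
qed

lemma overlap_prod_sample:
  assumes "c \<le> m"
  shows "overlap_prod c (\<lambda>j\<in>{..<2*m - c}. X (\<phi> j) \<omega>) = h_sample \<phi> \<omega> * h_sample (\<phi> \<circ> overlap_idx m c) \<omega>"
proof -
  have "restrict (\<lambda>j\<in>{..<2*m - c}. X (\<phi> j) \<omega>) {..<m} = (\<lambda>k\<in>{..<m}. X (\<phi> k) \<omega>)"
    using assms by (auto simp: fun_eq_iff)
  moreover have "(\<lambda>k\<in>{..<m}. (\<lambda>j\<in>{..<2*m - c}. X (\<phi> j) \<omega>) (overlap_idx m c k))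
      = (\<lambda>k\<in>{..<m}. X ((\<phi> \<circ> overlap_idx m c) k) \<omega>)"
    using overlap_idx_less[OF assms] by (auto simp: fun_eq_iff)
  ultimately show ?thesis by (simp add: overlap_prod_def h_sample_def)
qed

lemma integrable_overlap_prod:
  assumes "c \<le> m"
  shows "integrable (PiP {..<2*m - c}) (overlap_prod c)"
proof -
  have idx: "inj_on (overlap_idx m c) {..<m}" "overlap_idx m c ` {..<m} \<subseteq> {..<n}"
    using bij_betw_overlap_idx[OF assms] assms two_m_le_n by (auto simp: bij_betw_def)
  have "inj_on id {..<m}" "id ` {..<m} \<subseteq> {..<n}" using two_m_le_n by auto
  with idx have "integrable M (\<lambda>\<omega>. h_sample id \<omega> * h_sample (overlap_idx m c) \<omega>)"
    by (intro integrable_mult_square_integrable h_sample_measurable square_integrable_h_sample)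
  then have "integrable M (\<lambda>\<omega>. overlap_prod c (\<lambda>j\<in>{..<2*m - c}. X (id j) \<omega>))"
    unfolding overlap_prod_sample[OF assms] id_comp .
  moreover have "inj_on id {..<2*m - c}" "id ` {..<2*m - c} \<subseteq> {..<n}"
    using two_m_le_n by auto
  ultimately show ?thesis
    using integrable_sample_iff[OF _ _ overlap_prod_measurable[OF assms]] by blast
qed

lemma hcond_shift:
  assumes c: "c \<le> m" and x: "x \<in> space (PiP {..<c})"
  shows "(\<integral>v. h (merge {..<c} {c..<m} (x, \<lambda>k. v (k + (m - c)))) \<partial>PiP {m..<2*m - c}) = hcond P m h c x"
proof -
  let ?sh = "\<lambda>v. \<lambda>k\<in>{c..<m}. v (k + (m - c))"
  have inj: "inj_on (\<lambda>k. k + (m - c)) {c..<m}" and maps: "(\<lambda>k. k + (m - c)) \<in> {c..<m} \<rightarrow> {m..<2*m - c}"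
    using c by (auto simp: inj_on_def)
  have distr_sh: "distr (PiP {m..<2*m - c}) (PiP {c..<m}) ?sh = PiP {c..<m}"
    using distr_PiM_reindex[of "{m..<2*m - c}" "\<lambda>_. P", OF prob_space_P inj maps] by simp
  have sh: "?sh \<in> measurable (PiP {m..<2*m - c}) (PiP {c..<m})"
    by (rule measurable_restrict) (use c in \<open>auto intro!: measurable_component_singleton\<close>)
  have hx: "(\<lambda>w. h (merge {..<c} {c..<m} (x, w))) \<in> borel_measurable (PiP {c..<m})"
    using measurable_Pair2[OF h_merge_measurable[OF c] x] .
  have merge_sh: "merge {..<c} {c..<m} (x, ?sh v) = merge {..<c} {c..<m} (x, \<lambda>k. v (k + (m - c)))" for v
    by (auto simp: merge_def fun_eq_iff)
  have "hcond P m h c x = (\<integral>w. h (merge {..<c} {c..<m} (x, w)) \<partial>distr (PiP {m..<2*m - c}) (PiP {c..<m}) ?sh)"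
    by (simp add: distr_sh hcond_eq_integral_merge[OF c])
  also have "\<dots> = (\<integral>v. h (merge {..<c} {c..<m} (x, ?sh v)) \<partial>PiP {m..<2*m - c})"
    by (rule integral_distr[OF sh hx])
  finally show ?thesis
    by (simp only: merge_sh)
qed

lemma overlap_prod_merge:
  assumes "c \<le> m"
  shows "overlap_prod c (merge {..<c} {c..<2*m - c} (x, merge {c..<m} {m..<2*m - c} (u, v)))
       = h (merge {..<c} {c..<m} (x, u)) * h (merge {..<c} {c..<m} (x, \<lambda>k. v (k + (m - c))))"
proof -
  have "restrict (merge {..<c} {c..<2*m - c} (x, merge {c..<m} {m..<2*m - c} (u, v))) {..<m}
      = merge {..<c} {c..<m} (x, u)"
    using assms by (auto simp: fun_eq_iff merge_def)
  moreover have "(\<lambda>k\<in>{..<m}. merge {..<c} {c..<2*m - c} (x, merge {c..<m} {m..<2*m - c} (u, v)) (overlap_idx m c k))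
      = merge {..<c} {c..<m} (x, \<lambda>k. v (k + (m - c)))"
    using assms by (auto simp: fun_eq_iff merge_def overlap_idx_def)
  ultimately show ?thesis by (simp add: overlap_prod_def)
qed

text \<open>Given the shared coordinates x, the two factors depend on disjoint blocks of independent
  coordinates, and each integrates to h_c(x).\<close>
lemma integral_overlap_prod_section:
  assumes c: "c \<le> m" and x: "x \<in> space (PiP {..<c})"
    and int: "integrable (PiP {c..<2*m - c}) (\<lambda>z. overlap_prod c (merge {..<c} {c..<2*m - c} (x, z)))"
  shows "(\<integral>z. overlap_prod c (merge {..<c} {c..<2*m - c} (x, z)) \<partial>PiP {c..<2*m - c}) = (hcond P m h c x)\<^sup>2"
proof -
  interpret product_sigma_finite "\<lambda>_. P" by (rule product_sigma_finite_P)
  have "{c..<m} \<union> {m..<2*m - c} = {c..<2*m - c}" "{c..<m} \<inter> {m..<2*m - c} = {}"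
    using c by auto
  then have "(\<integral>z. overlap_prod c (merge {..<c} {c..<2*m - c} (x, z)) \<partial>PiP {c..<2*m - c})
      = (\<integral>u. (\<integral>v. overlap_prod c (merge {..<c} {c..<2*m - c} (x, merge {c..<m} {m..<2*m - c} (u, v)))
            \<partial>PiP {m..<2*m - c}) \<partial>PiP {c..<m})"
    using product_integral_fold[of "{c..<m}" "{m..<2*m - c}"] int by simp
  also have "\<dots> = (\<integral>u. h (merge {..<c} {c..<m} (x, u)) * hcond P m h c x \<partial>PiP {c..<m})"
    by (simp add: overlap_prod_merge[OF c] hcond_shift[OF c x])
  also have "\<dots> = (hcond P m h c x)\<^sup>2"
    by (simp add: hcond_eq_integral_merge[OF c] power2_eq_square)
  finally show ?thesis .
qed

lemma
  assumes c: "c \<le> m"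
  shows square_integrable_hcond: "integrable (PiP {..<c}) (\<lambda>x. (hcond P m h c x)\<^sup>2)"
    and overlap_moment_eq_integral_hcond: "overlap_moment c = (\<integral>x. (hcond P m h c x)\<^sup>2 \<partial>PiP {..<c})"
proof -
  interpret product_sigma_finite "\<lambda>_. P" by (rule product_sigma_finite_P)
  interpret PS: pair_sigma_finite "PiP {..<c}" "PiP {c..<2*m - c}"
    unfolding pair_sigma_finite_def by (intro conjI prob_space_imp_sigma_finite prob_space_PiP)
  let ?f = "\<lambda>x. \<integral>z. overlap_prod c (merge {..<c} {c..<2*m - c} (x, z)) \<partial>PiP {c..<2*m - c}"
  have un: "{..<c} \<union> {c..<2*m - c} = {..<2*m - c}" and d: "{..<c} \<inter> {c..<2*m - c} = {}"
    using c by auto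
  have int: "integrable (PiP ({..<c} \<union> {c..<2*m - c})) (overlap_prod c)"
    using integrable_overlap_prod[OF c] by (simp add: un)
  have moment: "overlap_moment c = integral\<^sup>L (PiP {..<c}) ?f"
    using product_integral_fold[OF d _ _ int] by (simp add: overlap_moment_def un)
  have int_pair: "integrable (PiP {..<c} \<Otimes>\<^sub>M PiP {c..<2*m - c}) (\<lambda>p. overlap_prod c (merge {..<c} {c..<2*m - c} p))"
    by (rule integrable_distr[OF measurable_merge]) (simp add: distr_merge[OF d] int)
  have int_f: "integrable (PiP {..<c}) ?f"
    using PS.integrable_fst'[OF int_pair] by simp
  have "AE x in PiP {..<c}. integrable (PiP {c..<2*m - c}) (\<lambda>z. overlap_prod c (merge {..<c} {c..<2*m - c} (x, z)))"
    using PS.AE_integrable_fst'[OF int_pair] by simp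
  then have ae: "AE x in PiP {..<c}. ?f x = (hcond P m h c x)\<^sup>2"
    using AE_space by eventually_elim (rule integral_overlap_prod_section[OF c])
  have meas: "(\<lambda>x. (hcond P m h c x)\<^sup>2) \<in> borel_measurable (PiP {..<c})"
    using hcond_measurable[OF c] by measurable
  show "integrable (PiP {..<c}) (\<lambda>x. (hcond P m h c x)\<^sup>2)"
    using integrable_cong_AE[OF borel_measurable_integrable[OF int_f] meas ae] int_f by simp
  show "overlap_moment c = (\<integral>x. (hcond P m h c x)\<^sup>2 \<partial>PiP {..<c})"
    unfolding moment by (rule integral_cong_AE[OF borel_measurable_integrable[OF int_f] meas ae])
qed

lemma Usigma2_eq_overlap_moment:
  assumes c: "c \<le> m"
  shows "Usigma2 M N X m h c = overlap_moment c - theta\<^sup>2"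
proof (cases "c = 0")
  case True
  have "PiP {..<c} = count_space {\<lambda>_. undefined}"
    using True by (simp add: PiM_empty)
  then show ?thesis
    using True overlap_moment_eq_integral_hcond[OF c] integral_hcond[OF c]
    by (simp add: Usigma2_def lebesgue_integral_count_space_finite)
next
  case False
  interpret PiP: prob_space "PiP {..<c}" by (rule prob_space_PiP)
  have J: "inj_on id {..<c}" "id ` {..<c} \<subseteq> {..<n}"
    using c two_m_le_n by auto
  have meas: "hcond P m h c \<in> borel_measurable (PiM {..<c} (\<lambda>_. N))"
    using hcond_measurable[OF c] by (simp add: measurable_PiP_iff)
  then have meas2: "(\<lambda>x. (hcond P m h c x - theta)\<^sup>2) \<in> borel_measurable (PiM {..<c} (\<lambda>_. N))"
    by measurable
  have restr: "hcond (distr M N (X 0)) m h c (\<lambda>i. X i \<omega>) = hcond P m h c (\<lambda>j\<in>{..<c}. X (id j) \<omega>)" for \<omega>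
    using hcond_restrict[of c "\<lambda>i. X i \<omega>"] by (simp add: P_def)
  have "expectation (\<lambda>\<omega>. hcond P m h c (\<lambda>j\<in>{..<c}. X (id j) \<omega>)) = theta"
    using integral_sample[OF J meas] integral_hcond[OF c] by simp
  then have "Usigma2 M N X m h c = expectation (\<lambda>\<omega>. (hcond P m h c (\<lambda>j\<in>{..<c}. X (id j) \<omega>) - theta)\<^sup>2)"
    using False by (simp add: Usigma2_def restr)
  also have "\<dots> = PiP.variance (hcond P m h c)"
    using integral_sample[OF J meas2] integral_hcond[OF c] by simp
  also have "\<dots> = overlap_moment c - theta\<^sup>2"
    using PiP.variance_eq[OF PiP.square_integrable_imp_integrable[OF hcond_measurable[OF c]]]
      square_integrable_hcond[OF c] overlap_moment_eq_integral_hcond[OF c] integral_hcond[OF c]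
    by simp
  finally show ?thesis .
qed

lemma
  assumes S: "S \<subseteq> {..<n}" "bij_betw \<alpha> {..<m} S" and T: "T \<subseteq> {..<n}" "bij_betw \<beta> {..<m} T"
  shows integrable_h_sample_pair: "integrable M (\<lambda>\<omega>. h_sample \<alpha> \<omega> * h_sample \<beta> \<omega>)"
    and expectation_h_sample_pair:
      "expectation (\<lambda>\<omega>. h_sample \<alpha> \<omega> * h_sample \<beta> \<omega>) = overlap_moment (card (S \<inter> T))"
proof -
  define c where "c = card (S \<inter> T)"
  have fin: "finite S" "finite T"
    using S T finite_subset by auto
  have card: "card S = m" "card T = m"
    using S T by (simp_all add: bij_betw_same_card[symmetric])
  obtain \<phi> where \<phi>: "bij_betw \<phi> {..<2*m - c} (S \<union> T)" "bij_betw \<phi> {..<m} S"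
    "bij_betw (\<phi> \<circ> overlap_idx m c) {..<m} T"
    using obtain_overlap_enumeration[OF fin(1) card(1) fin(2) card(2)] unfolding c_def by metis
  have c: "c \<le> m"
    unfolding c_def using card fin by (metis card_mono inf_le1)
  have J: "inj_on \<phi> {..<2*m - c}" "\<phi> ` {..<2*m - c} \<subseteq> {..<n}"
    using \<phi>(1) S T by (auto simp: bij_betw_def)
  have eq: "h_sample \<alpha> \<omega> * h_sample \<beta> \<omega> = overlap_prod c (\<lambda>j\<in>{..<2*m - c}. X (\<phi> j) \<omega>)"
    if "\<omega> \<in> space M" for \<omega>
  proof -
    have "X i \<omega> \<in> space N" if "i \<in> S \<union> T" for i
      using that S T measurable_space[OF X_measurable \<open>\<omega> \<in> space M\<close>] by auto
    then show ?thesis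
      using h_reindex_bij_betw[OF S(2) \<phi>(2), of "\<lambda>i. X i \<omega>"] h_reindex_bij_betw[OF T(2) \<phi>(3), of "\<lambda>i. X i \<omega>"]
      by (simp add: overlap_prod_sample[OF c] h_sample_def)
  qed
  show "integrable M (\<lambda>\<omega>. h_sample \<alpha> \<omega> * h_sample \<beta> \<omega>)"
    using integrable_sample_iff[OF J overlap_prod_measurable[OF c]] integrable_overlap_prod[OF c]
    by (simp add: Bochner_Integration.integrable_cong[OF refl eq])
  show "expectation (\<lambda>\<omega>. h_sample \<alpha> \<omega> * h_sample \<beta> \<omega>) = overlap_moment (card (S \<inter> T))"
    using integral_sample[OF J overlap_prod_measurable[OF c]]
    by (simp add: Bochner_Integration.integral_cong[OF refl eq] overlap_moment_def c_def)
qed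

abbreviation m_subsets :: "nat set set" where
  "m_subsets \<equiv> {S. S \<subseteq> {..<n} \<and> card S = m}"

definition h_subset :: "nat set \<Rightarrow> 'a \<Rightarrow> real" where
  "h_subset S = h_sample ((!) (sorted_list_of_set S))"

lemma Ustat_eq_sum_h_subset:
  "Ustat n m h X = (\<lambda>\<omega>. (\<Sum>S\<in>m_subsets. h_subset S \<omega>) / real (n choose m))"
  by (simp add: fun_eq_iff Ustat_def h_subset_def h_sample_def kargs_def)

lemma
  assumes "S \<in> m_subsets"
  shows integrable_h_subset: "integrable M (h_subset S)"
    and expectation_h_subset: "expectation (h_subset S) = theta"
proof -
  have "inj_on ((!) (sorted_list_of_set S)) {..<m}" "(!) (sorted_list_of_set S) ` {..<m} \<subseteq> {..<n}"
    using assms bij_betw_sorted_list_of_set[of S] finite_subset[of S "{..<n}"] by (auto simp: bij_betw_def)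
  then show "integrable M (h_subset S)" "expectation (h_subset S) = theta"
    by (simp_all add: h_subset_def integrable_h_sample expectation_h_sample)
qed

lemma
  assumes "S \<in> m_subsets" "T \<in> m_subsets"
  shows integrable_h_subset_pair: "integrable M (\<lambda>\<omega>. h_subset S \<omega> * h_subset T \<omega>)"
    and expectation_h_subset_pair:
      "expectation (\<lambda>\<omega>. h_subset S \<omega> * h_subset T \<omega>) = overlap_moment (card (S \<inter> T))"
proof -
  have "bij_betw ((!) (sorted_list_of_set S)) {..<m} S" "bij_betw ((!) (sorted_list_of_set T)) {..<m} T"
    using assms bij_betw_sorted_list_of_set finite_subset[of _ "{..<n}"] by auto
  then show "integrable M (\<lambda>\<omega>. h_subset S \<omega> * h_subset T \<omega>)"
    "expectation (\<lambda>\<omega>. h_subset S \<omega> * h_subset T \<omega>) = overlap_moment (card (S \<inter> T))"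
    using assms integrable_h_sample_pair expectation_h_sample_pair unfolding h_subset_def by auto
qed

lemma sum_overlap_moment:
  assumes "S \<in> m_subsets"
  shows "(\<Sum>T\<in>m_subsets. overlap_moment (card (S \<inter> T)))
       = (\<Sum>k\<le>m. real (m choose k) * real ((n - m) choose (m - k)) * Usigma2 M N X m h k)
         + real (n choose m) * theta\<^sup>2"
proof -
  have "overlap_moment (card (S \<inter> T)) = Usigma2 M N X m h (card (S \<inter> T)) + theta\<^sup>2" for T
    using assms card_mono[of S "S \<inter> T"] finite_subset[of S "{..<n}"]
    by (simp add: Usigma2_eq_overlap_moment)
  then have "(\<Sum>T\<in>m_subsets. overlap_moment (card (S \<inter> T)))
      = (\<Sum>T\<in>m_subsets. Usigma2 M N X m h (card (S \<inter> T))) + card m_subsets * theta\<^sup>2"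
    by (simp add: sum.distrib)
  also have "card m_subsets = n choose m"
    using n_subsets[of "{..<n}" m] by simp
  finally show ?thesis
    using sum_subsets_by_card_Int[of "{..<n}" S m "Usigma2 M N X m h"] assms by simp
qed

lemma
  shows integrable_Ustat: "integrable M (Ustat n m h X)"
    and expectation_Ustat: "expectation (Ustat n m h X) = theta"
proof -
  show "integrable M (Ustat n m h X)"
    unfolding Ustat_eq_sum_h_subset
    by (intro Bochner_Integration.integrable_divide_zero Bochner_Integration.integrable_sum)
      (simp add: integrable_h_subset)
  have "real (n choose m) > 0"
    using two_m_le_n by simp
  then show "expectation (Ustat n m h X) = theta"
    using n_subsets[of "{..<n}" m] integrable_h_subset expectation_h_subset
    by (simp add: Ustat_eq_sum_h_subset Bochner_Integration.integral_sum)
qed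

lemma
  shows integrable_Ustat_square: "integrable M (\<lambda>\<omega>. (Ustat n m h X \<omega>)\<^sup>2)"
    and expectation_Ustat_square: "expectation (\<lambda>\<omega>. (Ustat n m h X \<omega>)\<^sup>2)
      = (\<Sum>k\<le>m. real (m choose k) * real ((n - m) choose (m - k)) * Usigma2 M N X m h k) / real (n choose m)
        + theta\<^sup>2"
proof -
  have U2: "(\<lambda>\<omega>. (Ustat n m h X \<omega>)\<^sup>2) = (\<lambda>\<omega>. (\<Sum>S\<in>m_subsets. h_subset S \<omega>)\<^sup>2 / (real (n choose m))\<^sup>2)"
    by (simp add: Ustat_eq_sum_h_subset power_divide)
  show "integrable M (\<lambda>\<omega>. (Ustat n m h X \<omega>)\<^sup>2)"
    using expectation_sum_square(1)[of m_subsets h_subset] integrable_h_subset_pair by (simp add: U2)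
  have "expectation (\<lambda>\<omega>. (Ustat n m h X \<omega>)\<^sup>2)
      = (\<Sum>S\<in>m_subsets. \<Sum>T\<in>m_subsets. overlap_moment (card (S \<inter> T))) / (real (n choose m))\<^sup>2"
    using expectation_sum_square(2)[of m_subsets h_subset] integrable_h_subset_pair
    by (simp add: U2 expectation_h_subset_pair)
  also have "\<dots> = (\<Sum>k\<le>m. real (m choose k) * real ((n - m) choose (m - k)) * Usigma2 M N X m h k) / real (n choose m)
        + theta\<^sup>2"
  proof -
    have "real (n choose m) > 0" "card m_subsets = n choose m"
      using two_m_le_n n_subsets[of "{..<n}" m] by simp_all
    then show ?thesis
      by (simp add: sum_overlap_moment field_simps power2_eq_square)
  qed
  finally show "expectation (\<lambda>\<omega>. (Ustat n m h X \<omega>)\<^sup>2)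
      = (\<Sum>k\<le>m. real (m choose k) * real ((n - m) choose (m - k)) * Usigma2 M N X m h k) / real (n choose m)
        + theta\<^sup>2" .
qed

theorem variance_Ustat:
  "variance (Ustat n m h X)
     = (\<Sum>k\<le>m. real (m choose k) * real ((n - m) choose (m - k)) * Usigma2 M N X m h k) / real (n choose m)"
  using variance_eq[OF integrable_Ustat integrable_Ustat_square]
  by (simp add: expectation_Ustat expectation_Ustat_square)

end

theorem lemma6:
  fixes M :: "'a measure" and N :: "'e measure" and X :: "nat \<Rightarrow> 'a \<Rightarrow> 'e"
    and h :: "(nat \<Rightarrow> 'e) \<Rightarrow> real" and n m :: nat
  assumes "prob_space M"
    and "m \<ge> 1" and "n \<ge> 2 * m"
    and "\<And>i. i < n \<Longrightarrow> X i \<in> measurable M N"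
    and "prob_space.indep_vars M (\<lambda>_. N) X {..<n}"
    and "\<And>i. i < n \<Longrightarrow> distr M N (X i) = distr M N (X 0)"
    and "h \<in> borel_measurable (PiM {..<m} (\<lambda>_. N))"
    and "\<And>x \<pi>. x \<in> space (PiM {..<m} (\<lambda>_. N)) \<Longrightarrow> \<pi> permutes {..<m} \<Longrightarrow>
           h (kargs m (x \<circ> \<pi>)) = h x"
    and "integrable M (\<lambda>\<omega>. (h (kargs m (\<lambda>i. X i \<omega>)))\<^sup>2)"
  shows "(let \<theta> = Utheta M X m h; \<sigma>2 = Usigma2 M N X m h in
          1 / real (n choose (2 * m)) * (1 / real ((2 * m) choose m)) *
          (\<Sum>c = 1..m. real ((n - m) choose (2 * m - c)) * real (m choose c) *
             (\<Sum>j = 0..c. real (c choose j) * real ((2 * m - c) choose (m - j)) *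
                (\<theta> * \<sigma>2 j + \<theta> * \<sigma>2 (c - j)))))
         = Utheta M X m h / 2 * prob_space.variance M (\<lambda>\<omega>. 2 * Ustat n m h X \<omega>)"
proof -
  have "0 < n"
    using assms(2,3) by linarith
  interpret u_statistic M N X n h m
    by (intro u_statistic.intro iid_sample.intro iid_sample_axioms.intro u_statistic_axioms.intro)
      (fact assms \<open>0 < n\<close>)+
  have \<sigma>0: "Usigma2 M N X m h 0 = 0"
    by (simp add: Usigma2_def)
  have "variance (\<lambda>\<omega>. 2 * Ustat n m h X \<omega>)
      = 4 * ((\<Sum>k\<le>m. real (m choose k) * real ((n - m) choose (m - k)) * Usigma2 M N X m h k)
        / real (n choose m))"
    using variance_cmult[of 2 "Ustat n m h X"] variance_Ustat by simp
  then show ?thesis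
    unfolding Let_def Utheta_eq_theta distrib_left[symmetric] mult.left_commute[of _ theta]
      sum_distrib_left[symmetric] overlap_double_sum[of "Usigma2 M N X m h", OF \<sigma>0 assms(3)]
    by simp
qed

end
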